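(* In the smooth setting described in the context, let $\hat p\in P$ and let $x,\bar x\in\mathbb{R}^n$. If $\pi_i=\nabla f_i(x)$ and $\bar\pi_i=\nabla f_i(\bar x)$ for $i\in[m]$, then $$\sum_{i=1}^m\hat p_i\,W_{f_i^*}(\pi_i;\bar\pi_i)\ge\frac{1}{2L_f}\Big\|\sum_{i=1}^m\hat p_i(\pi_i-\bar\pi_i)\Big\|^2.$$
   Context: Smooth setting: $P\subseteq\{p\in\mathbb{R}^m:\sum_ip_i=1,p\ge0\}$ is closed convex; each $f_i:\mathbb{R}^n\to\mathbb{R}$ is convex and differentiable with Lipschitz continuous gradient, and $f_i^*$ is its Fenchel conjugate. For $p\in P$, $L_p$ denotes the Lipschitz constant of $\nabla(\sum_ip_if_i)$, and $L_f:=\max_{p\in P}L_p$. For $\pi_i\in\mathrm{dom}f_i^*$ and $\bar\pi_i=\nabla f_i(\bar x)$, the Bregman distance is $W_{f_i^*}(\pi_i;\bar\pi_i)=f_i^*(\pi_i)-f_i^*(\bar\pi_i)-\langle\bar x,\pi_i-\bar\pi_i\rangle$, where $\bar x\in\partial f_i^*(\bar\pi_i)$ is used as the subgradient of $f_i^*$ at $\bar\pi_i$. *)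

theory Defs
  imports "HOL-Analysis.Analysis"
begin

text \<open>Fenchel conjugate f^*(y) = sup_x (<y,x> - f x) (real-valued supremum; it is
  finite at every gradient point of a differentiable convex function, which is
  the only place it is evaluated below).\<close>
definition fenchel_conj :: "('a::real_inner \<Rightarrow> real) \<Rightarrow> 'a \<Rightarrow> real" where
  "fenchel_conj f y = (SUP x. inner y x - f x)"

text \<open>Bregman distance of f^* between \<pi> and \<pi>bar, using xbar as subgradient of f^* at \<pi>bar.\<close>
definition bregman_conj :: "('a::real_inner \<Rightarrow> real) \<Rightarrow> 'a \<Rightarrow> 'a \<Rightarrow> 'a \<Rightarrow> real" where
  "bregman_conj f xbar \<pi> \<pi>bar =
     fenchel_conj f \<pi> - fenchel_conj f \<pi>bar - inner xbar (\<pi> - \<pi>bar)"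

definition lip_const :: "('a::metric_space \<Rightarrow> 'b::metric_space) \<Rightarrow> real" where
  "lip_const F = Inf {C. C-lipschitz_on UNIV F}"

text \<open>L_p: Lipschitz constant of the gradient of sum_i p_i f_i, where g i is the gradient of f i.\<close>
definition L_p :: "('m::finite \<Rightarrow> 'a::euclidean_space \<Rightarrow> 'a) \<Rightarrow> real^'m \<Rightarrow> real" where
  "L_p g p = lip_const (\<lambda>x. \<Sum>i\<in>UNIV. (p $ i) *\<^sub>R g i x)"

text \<open>L_f = max over P of L_p (written as a supremum; coincides with the max when attained).\<close>
definition L_f :: "('m::finite \<Rightarrow> 'a::euclidean_space \<Rightarrow> 'a) \<Rightarrow> (real^'m) set \<Rightarrow> real" where
  "L_f g P = (SUP p\<in>P. L_p g p)"

end

theory Submission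
  imports Defs
begin

text \<open>At a gradient point \<pi> = grad f(x) the supremum defining f^* is attained at x, so
  W_{f^*}(grad f(x); grad f(x')) is the primal Bregman distance f(x') - f(x) - <grad f(x), x' - x>.
  Weighting by p_i, the left-hand side becomes the Bregman distance of F = sum_i p_i f_i, a
  convex function whose gradient is L_f-Lipschitz. For such F the Bregman distance is at least
  |grad F(x') - grad F(x)|^2 / (2L): compare the gradient inequality at x with the descent
  lemma at x' along the step z = x' - (grad F(x') - grad F(x)) / L.\<close>

lemma has_real_derivative_along_line:
  fixes F :: "'a::real_inner \<Rightarrow> real"
  assumes "\<And>z. (F has_derivative (\<lambda>h. inner (G z) h)) (at z)"
  shows "((\<lambda>t. F (y + t *\<^sub>R d)) has_real_derivative inner (G (y + t *\<^sub>R d)) d) (at t within S)"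
proof -
  have line: "((\<lambda>t. y + t *\<^sub>R d) has_derivative (\<lambda>s. s *\<^sub>R d)) (at t within S)"
    by (auto intro!: derivative_eq_intros)
  have "((\<lambda>t. F (y + t *\<^sub>R d)) has_derivative (\<lambda>s. inner (G (y + t *\<^sub>R d)) (s *\<^sub>R d))) (at t within S)"
    using has_derivative_compose[OF line has_derivative_at_withinI[OF assms]] by (simp add: o_def)
  then show ?thesis
    unfolding has_field_derivative_def
    by (rule has_derivative_eq_rhs) (auto simp: fun_eq_iff mult.commute)
qed

lemma convex_on_gradient_inequality:
  fixes F :: "'a::real_inner \<Rightarrow> real"
  assumes "convex_on UNIV F" "\<And>z. (F has_derivative (\<lambda>h. inner (G z) h)) (at z)"
  shows "F u + inner (G u) (v - u) \<le> F v"
proof -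
  define h where "h = (\<lambda>t. F (u + t *\<^sub>R (v - u)))"
  have "convex_on UNIV h"
  proof (rule convex_onI)
    fix t a b :: real
    assume "0 < t" "t < 1"
    have "u + ((1 - t) *\<^sub>R a + t *\<^sub>R b) *\<^sub>R (v - u)
        = (1 - t) *\<^sub>R (u + a *\<^sub>R (v - u)) + t *\<^sub>R (u + b *\<^sub>R (v - u))"
      by (simp add: algebra_simps)
    then show "h ((1 - t) *\<^sub>R a + t *\<^sub>R b) \<le> (1 - t) * h a + t * h b"
      unfolding h_def using convex_onD[OF assms(1), of t] \<open>0 < t\<close> \<open>t < 1\<close> by simp
  qed simp
  moreover have "(h has_real_derivative inner (G u) (v - u)) (at 0 within UNIV)"
    unfolding h_def using has_real_derivative_along_line[OF assms(2), of u "v - u" 0] by simp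
  ultimately have "inner (G u) (v - u) * (1 - 0) \<le> h 1 - h 0"
    by (intro convex_on_imp_above_tangent) auto
  then show ?thesis
    unfolding h_def by simp
qed

lemma lipschitz_gradient_quadratic_upper_bound:
  fixes F :: "'a::real_inner \<Rightarrow> real"
  assumes grad: "\<And>z. (F has_derivative (\<lambda>h. inner (G z) h)) (at z)"
    and lip: "L-lipschitz_on UNIV G"
  shows "F z \<le> F y + inner (G y) (z - y) + L / 2 * (norm (z - y))\<^sup>2"
proof -
  define d where "d = z - y"
  define k where "k = (\<lambda>t. F (y + t *\<^sub>R d) - t * inner (G y) d - L / 2 * t\<^sup>2 * (norm d)\<^sup>2)"
  have "DERIV k t :> inner (G (y + t *\<^sub>R d)) d - inner (G y) d - L * t * (norm d)\<^sup>2" for t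
    unfolding k_def
    by (rule derivative_eq_intros has_real_derivative_along_line[OF grad] refl | simp)+
  then obtain \<xi> where \<xi>: "0 < \<xi>" "\<xi> < 1"
    and mvt: "k 1 - k 0 = inner (G (y + \<xi> *\<^sub>R d)) d - inner (G y) d - L * \<xi> * (norm d)\<^sup>2"
    using MVT2[of 0 1 k] by force
  have "inner (G (y + \<xi> *\<^sub>R d)) d - inner (G y) d = inner (G (y + \<xi> *\<^sub>R d) - G y) d"
    by (simp add: inner_diff_left)
  also have "\<dots> \<le> norm (G (y + \<xi> *\<^sub>R d) - G y) * norm d"
    by (rule norm_cauchy_schwarz)
  also have "\<dots> \<le> L * norm (\<xi> *\<^sub>R d) * norm d"
    using lipschitz_onD[OF lip, of "y + \<xi> *\<^sub>R d" y] by (simp add: dist_norm mult_right_mono)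
  also have "\<dots> = L * \<xi> * (norm d)\<^sup>2"
    using \<xi> by (simp add: power2_eq_square)
  finally have "k 1 \<le> k 0"
    using mvt by simp
  then show ?thesis
    unfolding k_def d_def by (simp add: algebra_simps)
qed

lemma convex_lipschitz_gradient_bregman_lower_bound:
  fixes F :: "'a::real_inner \<Rightarrow> real"
  assumes convex: "convex_on UNIV F"
    and grad: "\<And>z. (F has_derivative (\<lambda>h. inner (G z) h)) (at z)"
    and lip: "L-lipschitz_on UNIV G"
  shows "1 / (2 * L) * (norm (G y - G x))\<^sup>2 \<le> F y - F x - inner (G x) (y - x)"
proof (cases "L = 0")
  case True
  \<comment> \<open>then the left-hand side is 0, since division by zero yields 0\<close>
  then show ?thesis
    using convex_on_gradient_inequality[OF convex grad, of x y] by simp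
next
  case False
  with lipschitz_on_nonneg[OF lip] have "0 < L" by simp
  define e where "e = G y - G x"
  define z where "z = y - (1 / L) *\<^sub>R e"
  have "F x + inner (G x) (z - x) \<le> F z"
    by (rule convex_on_gradient_inequality[OF convex grad])
  also have "\<dots> \<le> F y + inner (G y) (z - y) + L / 2 * (norm (z - y))\<^sup>2"
    by (rule lipschitz_gradient_quadratic_upper_bound[OF grad lip])
  finally have "F x + inner (G x) (z - x) \<le> F y + inner (G y) (z - y) + L / 2 * (norm (z - y))\<^sup>2" .
  moreover have "inner (G x) (z - x) = inner (G x) (z - y) + inner (G x) (y - x)"
    by (simp add: inner_diff_right)
  moreover have "inner (G y) (z - y) - inner (G x) (z - y) = - (1 / L) * (norm e)\<^sup>2"
    unfolding z_def by (simp add: e_def inner_diff_left power2_norm_eq_inner algebra_simps)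
  moreover have "L / 2 * (norm (z - y))\<^sup>2 = 1 / (2 * L) * (norm e)\<^sup>2"
    unfolding z_def using \<open>0 < L\<close> by (simp add: power2_eq_square field_simps)
  ultimately show ?thesis
    unfolding e_def[symmetric] by (simp add: field_simps)
qed

lemma fenchel_conj_at_gradient:
  fixes f :: "'a::real_inner \<Rightarrow> real"
  assumes "convex_on UNIV f" "\<And>z. (f has_derivative (\<lambda>h. inner (g z) h)) (at z)"
  shows "fenchel_conj f (g y) = inner (g y) y - f y"
  unfolding fenchel_conj_def
proof (rule cSup_eq_maximum)
  fix w
  assume "w \<in> range (\<lambda>x. inner (g y) x - f x)"
  then obtain x where "w = inner (g y) x - f x"
    by auto
  with convex_on_gradient_inequality[OF assms, of y x] show "w \<le> inner (g y) y - f y"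
    by (simp add: inner_diff_right)
qed auto

lemma bregman_conj_at_gradients:
  fixes f :: "'a::real_inner \<Rightarrow> real"
  assumes "convex_on UNIV f" "\<And>z. (f has_derivative (\<lambda>h. inner (g z) h)) (at z)"
  shows "bregman_conj f x' (g x) (g x') = f x' - f x - inner (g x) (x' - x)"
  unfolding bregman_conj_def fenchel_conj_at_gradient[OF assms]
  by (simp add: inner_diff_left inner_diff_right inner_commute)

lemma convex_on_nonneg_weighted_sum:
  assumes "finite I" "\<And>i. i \<in> I \<Longrightarrow> 0 \<le> p i" "\<And>i. i \<in> I \<Longrightarrow> convex_on S (f i)" "convex S"
  shows "convex_on S (\<lambda>x. \<Sum>i\<in>I. p i * f i x)"
  using assms by (induction I rule: finite_induct) (auto simp: convex_on_const intro!: convex_on_add convex_on_cmul)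

lemma lipschitz_on_sum:
  fixes f :: "'i \<Rightarrow> 'a::metric_space \<Rightarrow> 'b::real_normed_vector"
  assumes "finite I" "\<And>i. i \<in> I \<Longrightarrow> (L i)-lipschitz_on U (f i)"
  shows "(\<Sum>i\<in>I. L i)-lipschitz_on U (\<lambda>x. \<Sum>i\<in>I. f i x)"
  using assms by (induction I rule: finite_induct) (auto intro: lipschitz_on_constant lipschitz_on_add)

lemma lipschitz_on_lip_const:
  fixes F :: "'a::metric_space \<Rightarrow> 'b::metric_space"
  assumes "C-lipschitz_on UNIV F"
  shows "(lip_const F)-lipschitz_on UNIV F"
proof -
  let ?S = "{C. C-lipschitz_on UNIV F}"
  have nonempty: "?S \<noteq> {}"
    using assms by auto
  show ?thesis
  proof (rule lipschitz_onI)
    show "0 \<le> lip_const F"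
      unfolding lip_const_def by (rule cInf_greatest[OF nonempty]) (auto simp: lipschitz_on_def)
    fix a b :: 'a
    show "dist (F a) (F b) \<le> lip_const F * dist a b"
    proof (cases "a = b")
      case False
      then have "0 < dist a b"
        by simp
      have "dist (F a) (F b) / dist a b \<le> lip_const F"
        unfolding lip_const_def
        by (rule cInf_greatest[OF nonempty])
          (use \<open>0 < dist a b\<close> in \<open>auto simp: lipschitz_on_def divide_le_eq\<close>)
      then show ?thesis
        using \<open>0 < dist a b\<close> by (simp add: divide_le_eq)
    qed simp
  qed
qed

lemma lip_const_le:
  assumes "C-lipschitz_on UNIV F"
  shows "lip_const F \<le> C"
  unfolding lip_const_def
  by (rule cInf_lower) (use assms in \<open>auto intro!: bdd_belowI[of _ 0] simp: lipschitz_on_def\<close>)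

lemma weighted_sum_lipschitz_on:
  fixes g :: "'m::finite \<Rightarrow> 'a::real_normed_vector \<Rightarrow> 'b::real_normed_vector"
  assumes "\<And>i. (Lc i)-lipschitz_on UNIV (g i)"
  shows "(\<Sum>i\<in>UNIV. \<bar>p i\<bar> * Lc i)-lipschitz_on UNIV (\<lambda>x. \<Sum>i\<in>UNIV. p i *\<^sub>R g i x)"
  by (rule lipschitz_on_sum) (auto intro: lipschitz_on_cmult assms)

lemma lipschitz_on_L_p:
  assumes "\<And>i. \<exists>L. L-lipschitz_on UNIV (g i)"
  shows "(L_p g p)-lipschitz_on UNIV (\<lambda>x. \<Sum>i\<in>UNIV. p $ i *\<^sub>R g i x)"
proof -
  obtain Lc where "\<And>i. (Lc i)-lipschitz_on UNIV (g i)"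
    using assms by metis
  then show ?thesis
    unfolding L_p_def by (rule lipschitz_on_lip_const[OF weighted_sum_lipschitz_on])
qed

lemma L_p_le_L_f:
  assumes P_simplex: "P \<subseteq> {p. (\<forall>i. 0 \<le> p $ i) \<and> (\<Sum>i\<in>UNIV. p $ i) = 1}"
    and lip: "\<And>i. \<exists>L. L-lipschitz_on UNIV (g i)"
    and "p \<in> P"
  shows "L_p g p \<le> L_f g P"
proof -
  obtain Lc where Lc: "\<And>i. (Lc i)-lipschitz_on UNIV (g i)"
    using lip by metis
  have "L_p g q \<le> (\<Sum>i\<in>UNIV. Lc i)" if "q \<in> P" for q
  proof -
    have q: "\<forall>i. 0 \<le> q $ i" "(\<Sum>i\<in>UNIV. q $ i) = 1"
      using that P_simplex by auto
    have "\<bar>q $ i\<bar> \<le> 1" for i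
      using member_le_sum[of i UNIV "\<lambda>i. q $ i"] q by auto
    then have "(\<Sum>i\<in>UNIV. \<bar>q $ i\<bar> * Lc i) \<le> (\<Sum>i\<in>UNIV. Lc i)"
      using lipschitz_on_nonneg[OF Lc] by (intro sum_mono) (simp add: mult_left_le_one_le)
    then show ?thesis
      unfolding L_p_def by (intro order.trans[OF lip_const_le[OF weighted_sum_lipschitz_on[OF Lc]]])
  qed
  then have "bdd_above (L_p g ` P)"
    by (intro bdd_aboveI) auto
  then show ?thesis
    unfolding L_f_def by (rule cSUP_upper[OF \<open>p \<in> P\<close>])
qed

theorem lemma3p5:
  fixes P :: "(real^'m) set"
    and f :: "'m \<Rightarrow> 'a::euclidean_space \<Rightarrow> real"
    and g :: "'m \<Rightarrow> 'a \<Rightarrow> 'a"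
    and phat :: "real^'m" and x xbar :: 'a
    and \<pi> \<pi>bar :: "'m \<Rightarrow> 'a"
  assumes P_simplex: "P \<subseteq> {p. (\<forall>i. 0 \<le> p $ i) \<and> (\<Sum>i\<in>UNIV. p $ i) = 1}"
    and P_closed: "closed P" and P_convex: "convex P"
    and f_convex: "\<And>i. convex_on UNIV (f i)"
    and f_grad: "\<And>i y. (f i has_derivative (\<lambda>h. inner (g i y) h)) (at y)"
    and g_lip: "\<And>i. \<exists>L. L-lipschitz_on UNIV (g i)"
    and phat_in: "phat \<in> P"
    and \<pi>_def: "\<And>i. \<pi> i = g i x"
    and \<pi>bar_def: "\<And>i. \<pi>bar i = g i xbar"
  shows "(\<Sum>i\<in>UNIV. phat $ i * bregman_conj (f i) xbar (\<pi> i) (\<pi>bar i))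
         \<ge> 1 / (2 * L_f g P) * (norm (\<Sum>i\<in>UNIV. phat $ i *\<^sub>R (\<pi> i - \<pi>bar i)))\<^sup>2"
proof -
  define F where "F = (\<lambda>z. \<Sum>i\<in>UNIV. phat $ i * f i z)"
  define G where "G = (\<lambda>z. \<Sum>i\<in>UNIV. phat $ i *\<^sub>R g i z)"
  have "convex_on UNIV F"
    unfolding F_def using P_simplex phat_in f_convex by (intro convex_on_nonneg_weighted_sum) auto
  moreover have "(F has_derivative (\<lambda>h. inner (G z) h)) (at z)" for z
    unfolding F_def G_def inner_sum_left
    by (auto intro!: derivative_eq_intros f_grad)
  moreover have "(L_f g P)-lipschitz_on UNIV G"
    unfolding G_def using lipschitz_on_L_p[OF g_lip] L_p_le_L_f[OF P_simplex g_lip phat_in]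
    by (rule lipschitz_on_le)
  ultimately have "1 / (2 * L_f g P) * (norm (G xbar - G x))\<^sup>2 \<le> F xbar - F x - inner (G x) (xbar - x)"
    by (rule convex_lipschitz_gradient_bregman_lower_bound)
  moreover have "(\<Sum>i\<in>UNIV. phat $ i * bregman_conj (f i) xbar (\<pi> i) (\<pi>bar i))
      = F xbar - F x - inner (G x) (xbar - x)"
    by (simp add: \<pi>_def \<pi>bar_def bregman_conj_at_gradients[OF f_convex f_grad] F_def G_def
        inner_sum_left sum_subtractf[symmetric] right_diff_distrib)
  moreover have "(\<Sum>i\<in>UNIV. phat $ i *\<^sub>R (\<pi> i - \<pi>bar i)) = - (G xbar - G x)"
    by (simp add: G_def \<pi>_def \<pi>bar_def scaleR_diff_right sum_subtractf)
  ultimately show ?thesis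
    by (simp only: norm_minus_cancel)
qed

end
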